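(* Let $S_1,S_2,\ldots,S_k$ be numerical semigroups and let $S = \bigcap_{i=1}^k S_i$. Suppose that $d_i \in S_i \setminus \{0\}$ for $i=1,2,\ldots,k$. Then there exists an $A\in \mathsf{M}_{d_1+d_2+\cdots + d_k}(\mathbb{Q})$ such that $\mathcal{S}(A) = S$. In particular, $\dim_{\mathrm{mat}} S \leq d_1 + d_2 + \cdots + d_k$.
   Context: $\mathbb{N} = \{0,1,2,\ldots\}$. A semigroup means an additive subsemigroup of $\mathbb{N}$ containing $0$; a numerical semigroup is a semigroup with finite complement in $\mathbb{N}$. $\mathsf{M}_d(X)$ denotes the $d\times d$ matrices with entries in $X$. For $A \in \mathsf{M}_d(\mathbb{Q})$, $\mathcal{S}(A) = \{ n \in \mathbb{N} : A^n \in \mathsf{M}_d(\mathbb{Z})\}$. The matricial dimension $\dim_{\mathrm{mat}} S$ of a semigroup $S$ is the smallest $d$ such that $S = \mathcal{S}(A)$ for some $A \in \mathsf{M}_d(\mathbb{Q})$. *)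

theory Defs
  imports "Jordan_Normal_Form.Matrix"
begin

definition numerical_semigroup :: "nat set \<Rightarrow> bool" where
  "numerical_semigroup S \<longleftrightarrow>
     0 \<in> S \<and> (\<forall>a\<in>S. \<forall>b\<in>S. a + b \<in> S) \<and> finite (UNIV - S)"

definition int_entries :: "rat mat \<Rightarrow> bool" where
  "int_entries A \<longleftrightarrow> (\<forall>i<dim_row A. \<forall>j<dim_col A. A $$ (i, j) \<in> \<int>)"

definition power_semigroup :: "rat mat \<Rightarrow> nat set" where
  "power_semigroup A = {n. int_entries (A ^\<^sub>m n)}"

definition dim_mat :: "nat set \<Rightarrow> nat" where
  "dim_mat S = (LEAST d. \<exists>A \<in> carrier_mat d d. power_semigroup A = S)"

end

theory Submission
  imports Defs
begin

text \<open>
  For block-diagonal matrices \<open>S(A \<oplus> B) = S(A) \<inter> S(B)\<close>, so it suffices to realise one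
  numerical semigroup \<open>S\<close> in dimension \<open>d \<in> S\<close>, \<open>d > 0\<close>. Let \<open>w_r\<close> be the least element of \<open>S\<close>
  congruent to \<open>r\<close> modulo \<open>d\<close> (the Apery set of \<open>S\<close> with respect to \<open>d\<close>) and let \<open>A\<close> be the
  cyclic shift of \<open>\<int>/d\<close> whose entry in row \<open>j\<close> is \<open>2^(1 + w_j - w_(j+1))\<close>. The exponents
  telescope: row \<open>j\<close> of \<open>A^n\<close> has the single nonzero entry \<open>2^(n + w_j - w_(j+n))\<close>. For \<open>j = 0\<close>
  integrality means \<open>w_(n mod d) \<le> n\<close>, i.e. \<open>n \<in> S\<close>; conversely \<open>n \<in> S\<close> gives \<open>n + w_j \<in> S\<close>,
  whence \<open>w_(j+n) \<le> n + w_j\<close> for every \<open>j\<close>.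
\<close>

lemma two_power_int_Ints_iff: "(2::rat) powi m \<in> \<int> \<longleftrightarrow> 0 \<le> m"
proof
  assume integral: "(2::rat) powi m \<in> \<int>"
  show "0 \<le> m"
  proof (rule ccontr)
    assume "\<not> 0 \<le> m"
    define k where "k = nat (- m)"
    have "m = - int k" and "0 < k"
      using \<open>\<not> 0 \<le> m\<close> by (auto simp: k_def)
    then have "(2::rat) powi m = inverse (2 ^ k)" and "(1::rat) < 2 ^ k"
      by (auto simp: power_int_minus)
    then have "0 < (2::rat) powi m" and "(2::rat) powi m < 1"
      by (auto simp: inverse_less_1_iff)
    with integral show False using Ints_nonzero_abs_less1 by fastforce
  qed
next
  assume "0 \<le> m"
  then show "(2::rat) powi m \<in> \<int>"
    by (metis Ints_numeral Ints_power nat_0_le power_int_of_nat)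
qed

definition monomial_mat :: "nat \<Rightarrow> (nat \<Rightarrow> nat) \<Rightarrow> (nat \<Rightarrow> 'a::zero) \<Rightarrow> 'a mat" where
  "monomial_mat n \<sigma> c = mat n n (\<lambda>(i, j). if j = \<sigma> i then c i else 0)"

lemma monomial_mat_carrier [simp]: "monomial_mat n \<sigma> c \<in> carrier_mat n n"
  by (simp add: monomial_mat_def)

lemma mult_monomial_mat:
  fixes a c :: "nat \<Rightarrow> 'a::semiring_0"
  assumes \<sigma>: "\<sigma> ` {..<n} \<subseteq> {..<n}"
  shows "monomial_mat n \<sigma> a * monomial_mat n \<tau> c = monomial_mat n (\<tau> \<circ> \<sigma>) (\<lambda>i. a i * c (\<sigma> i))"
proof (rule eq_matI)
  fix i j assume "i < dim_row (monomial_mat n (\<tau> \<circ> \<sigma>) (\<lambda>i. a i * c (\<sigma> i)))"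
    and "j < dim_col (monomial_mat n (\<tau> \<circ> \<sigma>) (\<lambda>i. a i * c (\<sigma> i)))"
  then have i: "i < n" and j: "j < n" by (simp_all add: monomial_mat_def)
  then have \<sigma>i: "\<sigma> i < n" using \<sigma> by auto
  have "(monomial_mat n \<sigma> a * monomial_mat n \<tau> c) $$ (i, j)
      = (\<Sum>l<n. (if l = \<sigma> i then a i else 0) * monomial_mat n \<tau> c $$ (l, j))"
    using i j by (auto simp: monomial_mat_def scalar_prod_def lessThan_atLeast0 intro!: sum.cong)
  also have "\<dots> = a i * monomial_mat n \<tau> c $$ (\<sigma> i, j)"
    using \<sigma>i by (simp add: if_distrib[of "\<lambda>x. x * _"] cong del: if_weak_cong)
  also have "\<dots> = monomial_mat n (\<tau> \<circ> \<sigma>) (\<lambda>i. a i * c (\<sigma> i)) $$ (i, j)"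
    using \<sigma> i j by (auto simp: monomial_mat_def)
  finally show "(monomial_mat n \<sigma> a * monomial_mat n \<tau> c) $$ (i, j) = \<dots>" .
qed (auto simp: monomial_mat_def)

lemma funpow_image_subset: "f ` A \<subseteq> A \<Longrightarrow> (f ^^ n) ` A \<subseteq> A"
  by (induction n) auto

lemma pow_monomial_mat:
  fixes c :: "nat \<Rightarrow> 'a::comm_semiring_1"
  assumes \<sigma>: "\<sigma> ` {..<n} \<subseteq> {..<n}"
  shows "monomial_mat n \<sigma> c ^\<^sub>m k = monomial_mat n (\<sigma> ^^ k) (\<lambda>i. \<Prod>t<k. c ((\<sigma> ^^ t) i))"
proof (induction k)
  case 0
  show ?case by (rule eq_matI) (auto simp: monomial_mat_def)
next
  case (Suc k)
  have "monomial_mat n \<sigma> c ^\<^sub>m Suc k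
      = monomial_mat n (\<sigma> ^^ k) (\<lambda>i. \<Prod>t<k. c ((\<sigma> ^^ t) i)) * monomial_mat n \<sigma> c"
    using Suc by simp
  also have "\<dots> = monomial_mat n (\<sigma> \<circ> \<sigma> ^^ k) (\<lambda>i. (\<Prod>t<k. c ((\<sigma> ^^ t) i)) * c ((\<sigma> ^^ k) i))"
    by (rule mult_monomial_mat[OF funpow_image_subset[OF \<sigma>]])
  also have "\<dots> = monomial_mat n (\<sigma> ^^ Suc k) (\<lambda>i. \<Prod>t<Suc k. c ((\<sigma> ^^ t) i))"
    by simp
  finally show ?case .
qed

lemma int_entries_monomial_mat:
  assumes "\<sigma> ` {..<n} \<subseteq> {..<n}"
  shows "int_entries (monomial_mat n \<sigma> c) \<longleftrightarrow> (\<forall>i<n. c i \<in> \<int>)"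
  using assms by (fastforce simp: int_entries_def monomial_mat_def)

lemma power_semigroup_monomial_mat:
  assumes \<sigma>: "\<sigma> ` {..<n} \<subseteq> {..<n}"
  shows "power_semigroup (monomial_mat n \<sigma> (\<lambda>i. (2::rat) powi e i))
    = {k. \<forall>i<n. 0 \<le> (\<Sum>t<k. e ((\<sigma> ^^ t) i))}"
proof -
  have "(\<Prod>t<k. (2::rat) powi e ((\<sigma> ^^ t) i)) = 2 powi (\<Sum>t<k. e ((\<sigma> ^^ t) i))" for k i
    by (induction k) (simp_all add: power_int_add)
  then show ?thesis
    unfolding power_semigroup_def pow_monomial_mat[OF \<sigma>]
      int_entries_monomial_mat[OF funpow_image_subset[OF \<sigma>]]
    by (simp add: two_power_int_Ints_iff)
qed

lemma int_entries_four_block_mat: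
  assumes A: "A \<in> carrier_mat nr1 nc1" and D: "D \<in> carrier_mat nr2 nc2"
  shows "int_entries (four_block_mat A (0\<^sub>m nr1 nc2) (0\<^sub>m nr2 nc1) D)
    \<longleftrightarrow> int_entries A \<and> int_entries D"
  (is "int_entries ?M \<longleftrightarrow> _")
proof
  assume block: "int_entries ?M"
  have entry: "?M $$ (i, j) \<in> \<int>" if "i < nr1 + nr2" "j < nc1 + nc2" for i j
    using block that A D by (simp add: int_entries_def)
  have "A $$ (i, j) \<in> \<int>" if "i < nr1" "j < nc1" for i j
    using entry[of i j] that A D by simp
  moreover have "D $$ (i, j) \<in> \<int>" if "i < nr2" "j < nc2" for i j
    using entry[of "nr1 + i" "nc1 + j"] that A D by simp
  ultimately show "int_entries A \<and> int_entries D"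
    using A D by (simp add: int_entries_def)
next
  assume "int_entries A \<and> int_entries D"
  then show "int_entries ?M"
    using A D by (auto simp: int_entries_def)
qed

lemma power_semigroup_four_block_mat:
  assumes A: "A \<in> carrier_mat n n" and B: "B \<in> carrier_mat m m"
  shows "power_semigroup (four_block_mat A (0\<^sub>m n m) (0\<^sub>m m n) B)
    = power_semigroup A \<inter> power_semigroup B"
  using A B by (auto simp: power_semigroup_def pow_four_block_mat int_entries_four_block_mat)

lemma power_semigroup_zero_dim: "power_semigroup (0\<^sub>m 0 0) = UNIV"
  by (simp add: power_semigroup_def int_entries_def)

lemma power_semigroup_Inter_block_diag:
  fixes k :: nat and d :: "nat \<Rightarrow> nat" and S :: "nat \<Rightarrow> nat set"
  assumes "\<And>i. i \<in> {1..k} \<Longrightarrow> \<exists>A \<in> carrier_mat (d i) (d i). power_semigroup A = S i"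
  shows "\<exists>A \<in> carrier_mat (\<Sum>i=1..k. d i) (\<Sum>i=1..k. d i). power_semigroup A = (\<Inter>i\<in>{1..k}. S i)"
  using assms
proof (induction k)
  case 0
  show ?case using power_semigroup_zero_dim by auto
next
  case (Suc k)
  obtain A where A: "A \<in> carrier_mat (\<Sum>i=1..k. d i) (\<Sum>i=1..k. d i)"
    and SA: "power_semigroup A = (\<Inter>i\<in>{1..k}. S i)"
    using Suc by auto
  obtain B where B: "B \<in> carrier_mat (d (Suc k)) (d (Suc k))" and SB: "power_semigroup B = S (Suc k)"
    using Suc.prems by auto
  let ?M = "four_block_mat A (0\<^sub>m (\<Sum>i=1..k. d i) (d (Suc k))) (0\<^sub>m (d (Suc k)) (\<Sum>i=1..k. d i)) B"
  have "power_semigroup ?M = (\<Inter>i\<in>{1..k}. S i) \<inter> S (Suc k)"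
    using power_semigroup_four_block_mat[OF A B] unfolding SA SB .
  also have "\<dots> = (\<Inter>i\<in>{1..Suc k}. S i)"
    by (auto simp: atLeastAtMostSuc_conv)
  finally have "power_semigroup ?M = (\<Inter>i\<in>{1..Suc k}. S i)" .
  moreover have "?M \<in> carrier_mat (\<Sum>i=1..Suc k. d i) (\<Sum>i=1..Suc k. d i)"
    using A B by simp
  ultimately show ?case by (rule bexI[of _ ?M])
qed

definition apery :: "nat set \<Rightarrow> nat \<Rightarrow> nat \<Rightarrow> nat" where
  "apery S d r = (LEAST m. m \<in> S \<and> m mod d = r)"

lemma apery_le: "m \<in> S \<Longrightarrow> apery S d (m mod d) \<le> m"
  unfolding apery_def by (rule Least_le) simp

lemma numerical_semigroup_apery:
  assumes S: "numerical_semigroup S" and "0 < d" and "r < d"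
  shows "apery S d r \<in> S" and "apery S d r mod d = r"
proof -
  obtain N where N: "\<And>m. m \<notin> S \<Longrightarrow> m < N"
    using S unfolding numerical_semigroup_def
    by (metis Diff_iff UNIV_I finite_nat_set_iff_bounded)
  have "N \<le> r + N * d" using \<open>0 < d\<close> by (simp add: trans_le_add2)
  then have "r + N * d \<in> S" using N by (meson not_le)
  moreover have "(r + N * d) mod d = r" using \<open>r < d\<close> by simp
  ultimately have "\<exists>m. m \<in> S \<and> m mod d = r" by blast
  from LeastI_ex[OF this] show "apery S d r \<in> S" and "apery S d r mod d = r"
    unfolding apery_def by auto
qed

lemma numerical_semigroup_mem_iff_apery_le:
  assumes S: "numerical_semigroup S" and "d \<in> S" and "0 < d"
  shows "n \<in> S \<longleftrightarrow> apery S d (n mod d) \<le> n"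
proof
  show "apery S d (n mod d) \<le> n" if "n \<in> S"
    using that by (rule apery_le)
next
  let ?a = "apery S d (n mod d)"
  assume "?a \<le> n"
  moreover have "?a mod d = n mod d"
    using numerical_semigroup_apery[OF S \<open>0 < d\<close>] \<open>0 < d\<close> by simp
  ultimately have "d dvd n - ?a"
    using mod_eq_dvd_iff_nat[of ?a n d] by simp
  then obtain q where "n - ?a = d * q" ..
  with \<open>?a \<le> n\<close> have n: "n = ?a + q * d" by (simp add: mult.commute)
  have add: "a \<in> S \<Longrightarrow> b \<in> S \<Longrightarrow> a + b \<in> S" for a b
    using S by (simp add: numerical_semigroup_def)
  have "q * d \<in> S" for q
    by (induction q) (use S \<open>d \<in> S\<close> add in \<open>auto simp: numerical_semigroup_def\<close>)
  moreover have "?a \<in> S"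
    using numerical_semigroup_apery(1)[OF S \<open>0 < d\<close>] \<open>0 < d\<close> by simp
  ultimately have "?a + q * d \<in> S"
    using add by blast
  with n show "n \<in> S" by simp
qed

definition apery_mat :: "nat set \<Rightarrow> nat \<Rightarrow> rat mat" where
  "apery_mat S d = monomial_mat d (\<lambda>j. Suc j mod d)
     (\<lambda>j. 2 powi (1 + int (apery S d j) - int (apery S d (Suc j mod d))))"

lemma apery_mat_carrier [simp]: "apery_mat S d \<in> carrier_mat d d"
  by (simp add: apery_mat_def)

lemma power_semigroup_apery_mat:
  assumes S: "numerical_semigroup S" and "d \<in> S" and "0 < d"
  shows "power_semigroup (apery_mat S d) = S"
proof -
  let ?w = "apery S d" and ?\<sigma> = "\<lambda>j. Suc j mod d"
  let ?e = "\<lambda>j. 1 + int (?w j) - int (?w (Suc j mod d))"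
  have \<sigma>: "?\<sigma> ` {..<d} \<subseteq> {..<d}"
    using \<open>0 < d\<close> by auto
  have orbit: "(?\<sigma> ^^ t) j = (j + t) mod d" if "j < d" for j t
    using that by (induction t) (auto simp: mod_Suc_eq)
  have telescope: "(\<Sum>t<n. ?e ((?\<sigma> ^^ t) j)) = int n + int (?w j) - int (?w ((j + n) mod d))"
    if "j < d" for j n
    using that by (induction n) (auto simp: orbit mod_Suc_eq)
  have "(\<forall>j<d. 0 \<le> (\<Sum>t<n. ?e ((?\<sigma> ^^ t) j))) \<longleftrightarrow> n \<in> S" for n
  proof
    assume "\<forall>j<d. 0 \<le> (\<Sum>t<n. ?e ((?\<sigma> ^^ t) j))"
    moreover have "?w 0 = 0"
      using apery_le[of 0 S d] S by (simp add: numerical_semigroup_def)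
    ultimately have "?w (n mod d) \<le> n"
      using telescope[of 0 n] \<open>0 < d\<close> by auto
    then show "n \<in> S"
      using numerical_semigroup_mem_iff_apery_le[OF assms] by blast
  next
    assume "n \<in> S"
    show "\<forall>j<d. 0 \<le> (\<Sum>t<n. ?e ((?\<sigma> ^^ t) j))"
    proof (intro allI impI)
      fix j assume "j < d"
      have "n + ?w j \<in> S"
        using \<open>n \<in> S\<close> numerical_semigroup_apery(1)[OF S \<open>0 < d\<close> \<open>j < d\<close>] S
        by (simp add: numerical_semigroup_def)
      moreover have "(n + ?w j) mod d = (j + n) mod d"
        using numerical_semigroup_apery(2)[OF S \<open>0 < d\<close> \<open>j < d\<close>]
        by (metis add.commute mod_add_right_eq)
      ultimately have "?w ((j + n) mod d) \<le> n + ?w j"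
        using apery_le[of "n + ?w j" S d] by simp
      then show "0 \<le> (\<Sum>t<n. ?e ((?\<sigma> ^^ t) j))"
        using telescope[OF \<open>j < d\<close>] by simp
    qed
  qed
  then show ?thesis
    unfolding apery_mat_def power_semigroup_monomial_mat[OF \<sigma>] by blast
qed

theorem theorem2p5:
  fixes k :: nat and S :: "nat \<Rightarrow> nat set" and d :: "nat \<Rightarrow> nat"
  assumes "\<And>i. i \<in> {1..k} \<Longrightarrow> numerical_semigroup (S i)"
    and "\<And>i. i \<in> {1..k} \<Longrightarrow> d i \<in> S i - {0}"
  shows "(\<exists>A \<in> carrier_mat (\<Sum>i=1..k. d i) (\<Sum>i=1..k. d i).
           power_semigroup A = (\<Inter>i\<in>{1..k}. S i))
         \<and> dim_mat (\<Inter>i\<in>{1..k}. S i) \<le> (\<Sum>i=1..k. d i)"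
proof -
  have "\<exists>A \<in> carrier_mat (\<Sum>i=1..k. d i) (\<Sum>i=1..k. d i). power_semigroup A = (\<Inter>i\<in>{1..k}. S i)"
  proof (rule power_semigroup_Inter_block_diag)
    fix i assume "i \<in> {1..k}"
    then have "power_semigroup (apery_mat (S i) (d i)) = S i"
      using assms by (intro power_semigroup_apery_mat) auto
    then show "\<exists>A \<in> carrier_mat (d i) (d i). power_semigroup A = S i"
      using apery_mat_carrier by blast
  qed
  moreover from this have "dim_mat (\<Inter>i\<in>{1..k}. S i) \<le> (\<Sum>i=1..k. d i)"
    unfolding dim_mat_def by (rule Least_le)
  ultimately show ?thesis ..
qed

end
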